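(* Let $a>0$ and $f\in\mathcal{F}(\mathbb{L}_a)$. Let $g:\mathbb{R}_{\ge0}\to\mathbb{R}$ satisfy: (1) $g$ is $a$-periodic; (2) $g(0)>0$; (3) the even extension of $g$ to $\mathbb{R}$ has an $a$-periodic Fourier series $S_N(\xi)=\sum_{k=0}^N a_k\cos(2\pi k\xi/a)$ with all coefficients $a_k\ge0$; (4) $S_N(\xi)\to g(\xi)$ for every $\xi$. Then $|g|\,f\in\mathcal{F}(\mathbb{L}_a)$.
   Context: $\mathbb{L}=\{x\in\mathbb{R}\setminus\mathbb{Q}:\ \forall n\in\mathbb{N}\ \exists q\in\mathbb{N}\text{ with }\|qx\|<q^{-n}\}$ is the set of Liouville numbers, where $\|x\|=\min_{m\in\mathbb{Z}}|x-m|$, and for $a>0$, $\mathbb{L}_a=\mathbb{L}+\frac1a\mathbb{Z}=\{x+m/a: x\in\mathbb{L},m\in\mathbb{Z}\}$. For a finite Borel measure $\mu$ on $\mathbb{R}$, $\hat\mu(\xi)=\int e^{-2\pi i x\xi}\,d\mu(x)$. For a Borel set $E\subset\mathbb{R}$, $\mathcal{P}(E)$ denotes the Borel probability measures $\mu$ on $\mathbb{R}$ with $\mu(\mathbb{R}\setminus E)=0$. For a function $f$ with values in $\mathbb{R}_{\ge0}$ defined at least on $[M_0,\infty)$ for some $M_0$, we write $f\in\mathcal{F}(E)$ if there exist $\mu\in\mathcal{P}(E)$ and constants $c,M>0$ such that $|\hat\mu(\xi)|\le c\,f(|\xi|)$ for all $\xi\in\mathbb{R}$ with $|\xi|\ge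 M$. *)

theory Defs
  imports "HOL-Probability.Probability"
begin

definition dist_int :: "real \<Rightarrow> real" where
  "dist_int x = (INF m\<in>(\<int>::real set). \<bar>x - m\<bar>)"

definition liouville :: "real set" where
  "liouville = {x. x \<notin> \<rat> \<and>
     (\<forall>n::nat. \<exists>q::nat. q > 0 \<and> dist_int (real q * x) < 1 / (real q) ^ n)}"

definition liouville_shift :: "real \<Rightarrow> real set" where
  "liouville_shift a = {x + real_of_int m / a | x m. x \<in> liouville}"

definition fourier_measure :: "real measure \<Rightarrow> real \<Rightarrow> complex" where
  "fourier_measure \<mu> \<xi> = integral\<^sup>L \<mu> (\<lambda>x. cis (- 2 * pi * x * \<xi>))"

definition prob_on :: "real set \<Rightarrow> real measure set" where
  "prob_on E = {\<mu>. prob_space \<mu> \<and> sets \<mu> = sets borel \<and>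
                   (UNIV - E) \<in> sets \<mu> \<and> emeasure \<mu> (UNIV - E) = 0}"

definition decay_class :: "real set \<Rightarrow> (real \<Rightarrow> real) set" where
  "decay_class E = {f. (\<exists>M0. \<forall>x\<ge>M0. f x \<ge> 0) \<and>
     (\<exists>\<mu> c M. \<mu> \<in> prob_on E \<and> c > 0 \<and> M > 0 \<and>
        (\<forall>\<xi>. \<bar>\<xi>\<bar> \<ge> M \<longrightarrow> norm (fourier_measure \<mu> \<xi>) \<le> c * f \<bar>\<xi>\<bar>))}"

definition cos_coeff :: "real \<Rightarrow> (real \<Rightarrow> real) \<Rightarrow> nat \<Rightarrow> real" where
  "cos_coeff a h k = (if k = 0 then 1 / a else 2 / a) *
      integral {-a/2..a/2} (\<lambda>x. h x * cos (2 * pi * real k * x / a))"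

end

theory Submission
  imports Defs
begin

text \<open>Dividing the cosine coefficients of the even extension of g by g 0 gives a probability
  sequence p, since the cosine series converges to g 0 at the origin. The measure with mass p k / 2
  at each of the points \<open>\<plusminus>k/a\<close> has Fourier transform \<open>\<Sum>\<^sub>k p\<^sub>k cos (2\<pi>k\<xi>/a) = g \<bar>\<xi>\<bar> / g 0\<close>.
  Convolving a witness \<mu> for f with it gives a measure that is still concentrated on
  \<open>\<bbbL>\<^sub>a\<close>, because \<open>\<bbbL>\<^sub>a\<close> is invariant under translations by \<open>\<int>/a\<close>, and whose Fourier
  transform is \<open>\<mu>\<close>'s multiplied by \<open>g \<bar>\<xi>\<bar> / g 0\<close>.\<close>

lemma liouville_shift_add_int:
  assumes "x \<in> liouville_shift a"
  shows "x + real_of_int j / a \<in> liouville_shift a"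
proof -
  from assms obtain l m where "l \<in> liouville" and x: "x = l + real_of_int m / a"
    unfolding liouville_shift_def by blast
  moreover have "x + real_of_int j / a = l + real_of_int (m + j) / a"
    by (simp add: x add_divide_distrib)
  ultimately show ?thesis
    unfolding liouville_shift_def by blast
qed

lemma borel_measurable_cis [measurable]: "cis \<in> borel_measurable borel"
  by (intro borel_measurable_continuous_onI continuous_on_cis continuous_on_id)

lemma (in pair_prob_space) integral_pair_measure_bounded:
  fixes h :: "'a \<times> 'b \<Rightarrow> 'c::{banach, second_countable_topology}"
  assumes "h \<in> borel_measurable (M1 \<Otimes>\<^sub>M M2)" and "\<And>z. norm (h z) \<le> B"
  shows "integral\<^sup>L (M1 \<Otimes>\<^sub>M M2) h = (\<integral>x. (\<integral>y. h (x, y) \<partial>M2) \<partial>M1)"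
proof -
  have "integrable (M1 \<Otimes>\<^sub>M M2) h"
    using assms by (intro integrable_const_bound[where B=B]) auto
  then show ?thesis
    by (rule integral_fst'[symmetric])
qed

lemma (in pair_prob_space) integral_pair_measure_mult:
  fixes f :: "'a \<Rightarrow> 'c::{real_normed_field, banach, second_countable_topology}"
  assumes [measurable]: "f \<in> borel_measurable M1" "g \<in> borel_measurable M2"
    and f_bound: "\<And>x. norm (f x) \<le> B" and g_bound: "\<And>y. norm (g y) \<le> C"
  shows "(\<integral>z. f (fst z) * g (snd z) \<partial>(M1 \<Otimes>\<^sub>M M2)) = integral\<^sup>L M1 f * integral\<^sup>L M2 g"
proof -
  have "norm (f x * g y) \<le> B * C" for x y
    unfolding norm_mult
    by (intro mult_mono f_bound g_bound norm_ge_zero order_trans[OF norm_ge_zero f_bound])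
  then have "(\<integral>z. f (fst z) * g (snd z) \<partial>(M1 \<Otimes>\<^sub>M M2)) = (\<integral>x. (\<integral>y. f x * g y \<partial>M2) \<partial>M1)"
    by (subst integral_pair_measure_bounded[where B="B * C"]) auto
  then show ?thesis
    by simp
qed

lemma prob_space_convolution:
  assumes "prob_space M" "prob_space N"
    and [measurable_cong]: "sets M = sets borel" "sets N = sets borel"
  shows "prob_space (M \<star> N)"
proof -
  interpret M: prob_space M by fact
  interpret N: prob_space N by fact
  interpret pair_prob_space M N ..
  show ?thesis
    unfolding convolution_def by (rule prob_space_distr) measurable
qed

lemma fourier_measure_convolution:
  assumes "prob_space M" "prob_space N"
    and sets_M [measurable_cong]: "sets M = sets borel" and sets_N [measurable_cong]: "sets N = sets borel"
  shows "fourier_measure (M \<star> N) \<xi> = fourier_measure M \<xi> * fourier_measure N \<xi>"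
proof -
  interpret M: prob_space M by fact
  interpret N: prob_space N by fact
  interpret pair_prob_space M N ..
  have "fourier_measure (M \<star> N) \<xi>
      = (\<integral>z. cis (- 2 * pi * fst z * \<xi>) * cis (- 2 * pi * snd z * \<xi>) \<partial>(M \<Otimes>\<^sub>M N))"
    unfolding fourier_measure_def convolution_def
    by (subst integral_distr) (measurable, simp add: case_prod_beta cis_mult algebra_simps)
  also have "\<dots> = fourier_measure M \<xi> * fourier_measure N \<xi>"
    unfolding fourier_measure_def
    by (rule integral_pair_measure_mult[where B=1 and C=1])
       (simp_all add: measurable_cong_sets[OF sets_M refl] measurable_cong_sets[OF sets_N refl])
  finally show ?thesis .
qed

lemma prob_on_convolution:
  assumes M: "M \<in> prob_on E" and N: "prob_space N" and sets_N: "sets N = sets borel"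
    and AE_T: "AE y in N. y \<in> T" and add_closed: "\<And>x y. x \<in> E \<Longrightarrow> y \<in> T \<Longrightarrow> x + y \<in> E"
  shows "(M \<star> N) \<in> prob_on E"
proof -
  from M have "prob_space M" and sets_M: "sets M = sets borel"
    and E_borel: "UNIV - E \<in> sets borel" and "emeasure M (UNIV - E) = 0"
    unfolding prob_on_def by auto
  then have AE_E: "AE x in M. x \<in> E"
    by (intro AE_I'[of "UNIV - E"]) auto
  interpret M: prob_space M by fact
  interpret N: prob_space N by fact
  have "emeasure (M \<star> N) (UNIV - E) = (\<integral>\<^sup>+x. \<integral>\<^sup>+y. indicator (UNIV - E) (x + y) \<partial>N \<partial>M)"
    using E_borel sets_M sets_N
    by (intro convolution_emeasure') (auto intro: M.finite_measure N.finite_measure)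
  also have "\<dots> = (\<integral>\<^sup>+x. 0 \<partial>M)"
    using AE_E
  proof (intro nn_integral_cong_AE, eventually_elim)
    case (elim x)
    show ?case
      using AE_T by (subst nn_integral_cong_AE[where v="\<lambda>_. 0"])
        (auto elim!: eventually_mono simp: add_closed elim)
  qed
  finally show ?thesis
    using E_borel prob_space_convolution[OF \<open>prob_space M\<close> N sets_M sets_N]
    unfolding prob_on_def by auto
qed

lemma integral_embed_pmf_nat:
  fixes f :: "nat \<Rightarrow> real"
  assumes p_nonneg: "\<And>k. 0 \<le> p k" and p_sums: "p sums 1" and f_bound: "\<And>k. \<bar>f k\<bar> \<le> B"
  shows "(\<integral>k. f k \<partial>measure_pmf (embed_pmf p)) = (\<Sum>k. p k * f k)"
proof -
  have "(\<integral>\<^sup>+k. ennreal (p k) \<partial>count_space UNIV) = 1"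
    using p_sums p_nonneg by (simp add: nn_integral_count_space_nat suminf_ennreal2 sums_iff)
  then have pmf_p: "pmf (embed_pmf p) k = p k" for k
    by (rule pmf_embed_pmf[OF p_nonneg])
  have "summable (\<lambda>k. norm (p k * f k))"
  proof (rule summable_comparison_test)
    show "\<exists>N. \<forall>k\<ge>N. norm (norm (p k * f k)) \<le> p k * B"
      using p_nonneg f_bound by (auto simp: abs_mult intro!: mult_left_mono)
    show "summable (\<lambda>k. p k * B)"
      using p_sums by (intro summable_mult2) (simp add: sums_iff)
  qed
  then have "integrable (count_space UNIV) (\<lambda>k. p k * f k)"
    by (simp add: integrable_count_space_nat_iff)
  then show ?thesis
    unfolding measure_pmf_eq_density
    by (simp add: integral_density pmf_p p_nonneg integral_count_space_nat)
qed

text \<open>Mass \<open>p k / 2\<close> at each of \<open>k/a\<close> and \<open>-k/a\<close>: the sign is drawn by a fair coin.\<close>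

definition cosine_series_measure :: "real \<Rightarrow> (nat \<Rightarrow> real) \<Rightarrow> real measure" where
  "cosine_series_measure a p =
     distr (measure_pmf (embed_pmf p) \<Otimes>\<^sub>M measure_pmf (bernoulli_pmf (1/2))) borel
       (\<lambda>(k, b). (if b then real k else - real k) / a)"

lemma sets_cosine_series_measure [simp]: "sets (cosine_series_measure a p) = sets borel"
  by (simp add: cosine_series_measure_def)

lemma prob_space_cosine_series_measure: "prob_space (cosine_series_measure a p)"
  unfolding cosine_series_measure_def
  by (intro prob_space.prob_space_distr prob_space_pair measure_pmf.prob_space_axioms) measurable

lemma AE_cosine_series_measure_lattice:
  "AE y in cosine_series_measure a p. y \<in> range (\<lambda>m::int. real_of_int m / a)"
proof -
  have lattice_borel: "range (\<lambda>m::int. real_of_int m / a) \<in> sets borel"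
    by (rule sets.countable) (simp_all add: borel_closed)
  have "(if b then real k else - real k) / a \<in> range (\<lambda>m::int. real_of_int m / a)" for k b
    by (rule range_eqI[of _ _ "if b then int k else - int k"]) simp
  then have "AE z in measure_pmf (embed_pmf p) \<Otimes>\<^sub>M measure_pmf (bernoulli_pmf (1/2)).
      (case z of (k, b) \<Rightarrow> (if b then real k else - real k) / a) \<in> range (\<lambda>m::int. real_of_int m / a)"
    by (intro AE_I2) (simp split: prod.split)
  then show ?thesis
    unfolding cosine_series_measure_def using lattice_borel
    by (subst AE_distr_iff) (measurable, simp_all)
qed

lemma fourier_measure_cosine_series_measure:
  assumes p_nonneg: "\<And>k. 0 \<le> p k" and p_sums: "p sums 1"
  shows "fourier_measure (cosine_series_measure a p) \<xi>
    = complex_of_real (\<Sum>k. p k * cos (2 * pi * real k * \<xi> / a))"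
proof -
  let ?W = "measure_pmf (embed_pmf p)" and ?C = "measure_pmf (bernoulli_pmf (1/2))"
  define \<theta> where "\<theta> = 2 * pi * \<xi> / a"
  interpret pair_prob_space ?W ?C ..
  have "fourier_measure (cosine_series_measure a p) \<xi>
      = (\<integral>z. cis (- \<theta> * (if snd z then real (fst z) else - real (fst z))) \<partial>(?W \<Otimes>\<^sub>M ?C))"
    unfolding fourier_measure_def cosine_series_measure_def \<theta>_def
    by (subst integral_distr) (simp_all add: case_prod_beta mult_ac)
  also have "\<dots> = (\<integral>k. (\<integral>b. cis (- \<theta> * (if b then real k else - real k)) \<partial>?C) \<partial>?W)"
    by (subst integral_pair_measure_bounded[where B=1]) (simp_all cong: if_cong)
  also have "\<dots> = (\<integral>k. complex_of_real (cos (\<theta> * real k)) \<partial>?W)"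
  proof (intro Bochner_Integration.integral_cong refl)
    fix k
    show "(\<integral>b. cis (- \<theta> * (if b then real k else - real k)) \<partial>?C) = complex_of_real (cos (\<theta> * real k))"
      by (subst integral_measure_pmf[of UNIV])
         (simp_all add: UNIV_bool complex_eq_iff cos_minus sin_minus scaleR_conv_of_real)
  qed
  also have "\<dots> = complex_of_real (\<Sum>k. p k * cos (\<theta> * real k))"
    using integral_embed_pmf_nat[OF p_nonneg p_sums, of "\<lambda>k. cos (\<theta> * real k)" 1] by simp
  finally show ?thesis
    by (simp add: \<theta>_def mult_ac)
qed

lemma decay_class_multiplier:
  assumes f_in: "f \<in> decay_class E" and h_nonneg: "\<And>x. 0 \<le> h x" and "C > 0"
    and multiplier: "\<And>\<mu>. \<mu> \<in> prob_on E \<Longrightarrow>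
      \<exists>\<nu>\<in>prob_on E. \<forall>\<xi>. norm (fourier_measure \<nu> \<xi>) \<le> C * h \<bar>\<xi>\<bar> * norm (fourier_measure \<mu> \<xi>)"
  shows "(\<lambda>\<xi>. h \<xi> * f \<xi>) \<in> decay_class E"
proof -
  from f_in obtain M0 \<mu> c M where f_nonneg: "\<forall>x\<ge>M0. f x \<ge> 0" and \<mu>: "\<mu> \<in> prob_on E"
    and "c > 0" "M > 0" and \<mu>_bound: "\<forall>\<xi>. \<bar>\<xi>\<bar> \<ge> M \<longrightarrow> norm (fourier_measure \<mu> \<xi>) \<le> c * f \<bar>\<xi>\<bar>"
    unfolding decay_class_def by blast
  from multiplier[OF \<mu>] obtain \<nu> where \<nu>: "\<nu> \<in> prob_on E"
    and \<nu>_bound: "\<forall>\<xi>. norm (fourier_measure \<nu> \<xi>) \<le> C * h \<bar>\<xi>\<bar> * norm (fourier_measure \<mu> \<xi>)"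
    by blast
  have \<nu>_decay: "norm (fourier_measure \<nu> \<xi>) \<le> (C * c) * (h \<bar>\<xi>\<bar> * f \<bar>\<xi>\<bar>)"
    if "\<bar>\<xi>\<bar> \<ge> M" for \<xi>
  proof -
    have "norm (fourier_measure \<nu> \<xi>) \<le> C * h \<bar>\<xi>\<bar> * (c * f \<bar>\<xi>\<bar>)"
      using \<nu>_bound \<mu>_bound that \<open>C > 0\<close> h_nonneg
      by (meson order_trans mult_left_mono mult_nonneg_nonneg less_imp_le)
    then show ?thesis
      by (simp add: mult_ac)
  qed
  show ?thesis
    unfolding decay_class_def
  proof (intro CollectI conjI exI)
    show "\<forall>x\<ge>M0. 0 \<le> h x * f x"
      using f_nonneg h_nonneg by simp
    show "\<forall>\<xi>. \<bar>\<xi>\<bar> \<ge> M \<longrightarrow> norm (fourier_measure \<nu> \<xi>) \<le> (C * c) * (h \<bar>\<xi>\<bar> * f \<bar>\<xi>\<bar>)"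
      using \<nu>_decay by blast
  qed (use \<nu> \<open>c > 0\<close> \<open>C > 0\<close> \<open>M > 0\<close> in auto)
qed

theorem proposition3p3:
  fixes a :: real and f g :: "real \<Rightarrow> real"
  assumes a_pos: "a > 0"
    and f_in: "f \<in> decay_class (liouville_shift a)"
    and g_periodic: "\<forall>x\<ge>0. g (x + a) = g x"
    and g0: "g 0 > 0"
    and g_integrable: "(\<lambda>x. g \<bar>x\<bar>) absolutely_integrable_on {-a/2..a/2}"
    and coeff_nonneg: "\<forall>k. cos_coeff a (\<lambda>x. g \<bar>x\<bar>) k \<ge> 0"
    and series_conv: "\<forall>\<xi>. (\<lambda>N. \<Sum>k\<le>N. cos_coeff a (\<lambda>x. g \<bar>x\<bar>) k * cos (2 * pi * real k * \<xi> / a))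
                          \<longlonglongrightarrow> g \<bar>\<xi>\<bar>"
  shows "(\<lambda>\<xi>. \<bar>g \<xi>\<bar> * f \<xi>) \<in> decay_class (liouville_shift a)"
proof -
  define p where "p k = cos_coeff a (\<lambda>x. g \<bar>x\<bar>) k / g 0" for k
  have cosine_series: "(\<lambda>k. p k * cos (2 * pi * real k * \<xi> / a)) sums (g \<bar>\<xi>\<bar> / g 0)" for \<xi>
    using sums_divide[OF series_conv[rule_format, of \<xi>, folded sums_def_le]] by (simp add: p_def)
  have p_nonneg: "0 \<le> p k" for k
    using coeff_nonneg g0 by (simp add: p_def)
  have p_sums: "p sums 1"
    using cosine_series[of 0] g0 by simp
  have multiplier: "\<exists>\<nu>\<in>prob_on (liouville_shift a). \<forall>\<xi>.
      norm (fourier_measure \<nu> \<xi>) \<le> 1 / g 0 * \<bar>g \<bar>\<xi>\<bar>\<bar> * norm (fourier_measure \<mu> \<xi>)"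
    if \<mu>: "\<mu> \<in> prob_on (liouville_shift a)" for \<mu>
  proof -
    from \<mu> have \<mu>_prob: "prob_space \<mu>" and \<mu>_sets: "sets \<mu> = sets borel"
      unfolding prob_on_def by auto
    let ?\<nu> = "\<mu> \<star> cosine_series_measure a p"
    have "?\<nu> \<in> prob_on (liouville_shift a)"
      using prob_on_convolution[OF \<mu> prob_space_cosine_series_measure sets_cosine_series_measure
          AE_cosine_series_measure_lattice] liouville_shift_add_int by blast
    moreover have "fourier_measure ?\<nu> \<xi> = fourier_measure \<mu> \<xi> * complex_of_real (g \<bar>\<xi>\<bar> / g 0)" for \<xi>
      using fourier_measure_convolution[OF \<mu>_prob prob_space_cosine_series_measure
          \<mu>_sets sets_cosine_series_measure]
        fourier_measure_cosine_series_measure[OF p_nonneg p_sums] sums_unique[OF cosine_series]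
      by simp
    ultimately show ?thesis
      using g0 by (intro bexI[of _ ?\<nu>]) (auto simp: norm_mult norm_divide mult_ac)
  qed
  show ?thesis
    using g0 by (intro decay_class_multiplier[OF f_in _ _ multiplier]) auto
qed

end
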